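(* Let $v=(v_l,v_h)$ be a valuation profile, let $\alpha\in(0,1)$, and let $p\in\{c_l,c_l+1,\dots,c_h\}$. Then the $\alpha$-auction game with valuations $v$ has a Nash equilibrium $\sigma$ with $\pi_l(\sigma)=c_l+(p-c_l)$ and $\pi_h(\sigma)=c_h+(c_h-p)$, and there is a sequence $\{\sigma^\lambda\}_{\lambda\in\mathbb{N}}$ of mixed-strategy profiles, each with full support on $\mathcal{B}$ for both agents and each weakly payoff-monotone for this game, such that $\sigma^\lambda\to\sigma$.
   Context: Two agents $l,h$ jointly own an indivisible good. Agent $i\in\{l,h\}$ has valuation $v_i$; valuations are even nonnegative integers bounded by a maximum valuation $\overline{v}$, with $v_l<v_h$. Agent $i$'s utility from receiving the object and paying $p$ to the other agent is $v_i-p$; from not receiving the object and receiving transfer $p$ it is $p$; agents are expected-utility maximizers. Net valuations are $c_i\equiv v_i/2$. The bid set is $\mathcal{B}=\{0,1,\dots,\overline{p}\}$ with $\overline{p}$ an integer, $\overline{p}\geq\overline{v}/2$. For $\alpha\in[0,1]$, the $\alpha$-auction (with tie-breaker favoring $h$) is: each agent simultaneously chooses a bid in $\mathcal{B}$; the agent with the strictly higher bid receives the object, and in case of a tie agent $h$ receives the object; the agent receiving the object pays $\alpha\cdot(\text{winner's bid})+(1-\alpha)\cdot(\text{loser's bid})$ to the other agent. A mixed strategy of agent $i$ is $\sigma_i\in\Delta(\mathcal{B})$, and $\pi_i(\sigma)$ is agent $i$'s expected utility under profile $\sigma$. A Nash equilibrium is a profile in which each agent's strategy puts positive probability only on bids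 maximizing her expected utility given the other agent's strategy. A profile $\sigma$ is weakly payoff-monotone for the game if for each agent $i$ and each pair of bids $b,d\in\mathcal{B}$, $\sigma_i(b)>\sigma_i(d)$ implies that the expected utility of bid $b$ for agent $i$ against $\sigma_{-i}$ is strictly greater than that of bid $d$. Convergence is pointwise convergence of probability vectors. *)

theory Defs
  imports "HOL-Analysis.Analysis"
begin

datatype agent = L | H

type_synonym profile = "agent \<Rightarrow> nat \<Rightarrow> real"

definition bids :: "nat \<Rightarrow> nat set" where
  "bids pbar = {0..pbar}"

definition other :: "agent \<Rightarrow> agent" where
  "other i = (if i = L then H else L)"

definition payment :: "real \<Rightarrow> nat \<Rightarrow> nat \<Rightarrow> real" where
  "payment \<alpha> w los = \<alpha> * real w + (1 - \<alpha>) * real los"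

text \<open>Utility of agent i bidding b when the other agent bids d (tie favours H).\<close>
definition util :: "real \<Rightarrow> (agent \<Rightarrow> nat) \<Rightarrow> agent \<Rightarrow> nat \<Rightarrow> nat \<Rightarrow> real" where
  "util \<alpha> v i b d =
     (if i = H then
        (if d \<le> b then real (v H) - payment \<alpha> b d else payment \<alpha> d b)
      else
        (if d < b then real (v L) - payment \<alpha> b d else payment \<alpha> d b))"

definition is_mixed :: "nat \<Rightarrow> (nat \<Rightarrow> real) \<Rightarrow> bool" where
  "is_mixed pbar s \<longleftrightarrow> (\<forall>b. 0 \<le> s b) \<and> (\<forall>b. b \<notin> bids pbar \<longrightarrow> s b = 0)
      \<and> (\<Sum>b\<in>bids pbar. s b) = 1"

definition is_profile :: "nat \<Rightarrow> profile \<Rightarrow> bool" where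
  "is_profile pbar \<sigma> \<longleftrightarrow> (\<forall>i. is_mixed pbar (\<sigma> i))"

definition bid_util :: "nat \<Rightarrow> real \<Rightarrow> (agent \<Rightarrow> nat) \<Rightarrow> profile \<Rightarrow> agent \<Rightarrow> nat \<Rightarrow> real" where
  "bid_util pbar \<alpha> v \<sigma> i b = (\<Sum>d\<in>bids pbar. \<sigma> (other i) d * util \<alpha> v i b d)"

definition exp_util :: "nat \<Rightarrow> real \<Rightarrow> (agent \<Rightarrow> nat) \<Rightarrow> profile \<Rightarrow> agent \<Rightarrow> real" where
  "exp_util pbar \<alpha> v \<sigma> i = (\<Sum>b\<in>bids pbar. \<sigma> i b * bid_util pbar \<alpha> v \<sigma> i b)"

definition nash_eq :: "nat \<Rightarrow> real \<Rightarrow> (agent \<Rightarrow> nat) \<Rightarrow> profile \<Rightarrow> bool" where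
  "nash_eq pbar \<alpha> v \<sigma> \<longleftrightarrow> is_profile pbar \<sigma> \<and>
     (\<forall>i. \<forall>b\<in>bids pbar. \<sigma> i b > 0 \<longrightarrow>
        (\<forall>d\<in>bids pbar. bid_util pbar \<alpha> v \<sigma> i d \<le> bid_util pbar \<alpha> v \<sigma> i b))"

definition full_support :: "nat \<Rightarrow> profile \<Rightarrow> bool" where
  "full_support pbar \<sigma> \<longleftrightarrow> (\<forall>i. \<forall>b\<in>bids pbar. \<sigma> i b > 0)"

definition weakly_payoff_monotone :: "nat \<Rightarrow> real \<Rightarrow> (agent \<Rightarrow> nat) \<Rightarrow> profile \<Rightarrow> bool" where
  "weakly_payoff_monotone pbar \<alpha> v \<sigma> \<longleftrightarrow>
     (\<forall>i. \<forall>b\<in>bids pbar. \<forall>d\<in>bids pbar. \<sigma> i b > \<sigma> i d \<longrightarrow>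
        bid_util pbar \<alpha> v \<sigma> i b > bid_util pbar \<alpha> v \<sigma> i d)"

definition valid_setting :: "nat \<Rightarrow> nat \<Rightarrow> (agent \<Rightarrow> nat) \<Rightarrow> bool" where
  "valid_setting vbar pbar v \<longleftrightarrow> even (v L) \<and> even (v H) \<and> v L < v H \<and>
     v L \<le> vbar \<and> v H \<le> vbar \<and> vbar \<le> 2 * pbar"

end

theory Submission
  imports Defs
begin

text \<open>If both agents bid the same \<open>p\<close> with \<open>c\<^sub>l \<le> p \<le> c\<^sub>h\<close>, every deviation strictly
  lowers the deviator's payoff: underbidding lets \<open>h\<close> keep the object but receive less
  (or lets \<open>l\<close> lose it), and overbidding buys the object at a price above the deviator's
  net valuation (or pays more for it). So the pure profile at \<open>p\<close> is a strict Nash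
  equilibrium with the stated payoffs. Trembling towards the uniform distribution with
  weight \<open>\<epsilon>\<close> keeps \<open>p\<close> the unique most likely bid and, by continuity in \<open>\<epsilon>\<close>, the unique
  best bid for small \<open>\<epsilon>\<close>; all other bids are equally likely, so such a trembled profile is
  weakly payoff-monotone, and it converges to the pure profile as \<open>\<epsilon> \<rightarrow> 0\<close>.\<close>

definition trembling_profile :: "nat \<Rightarrow> nat \<Rightarrow> real \<Rightarrow> profile" where
  "trembling_profile pbar p \<epsilon> = (\<lambda>i b. if b \<in> bids pbar
     then (1 - \<epsilon>) * (if b = p then 1 else 0) + \<epsilon> / real (pbar + 1) else 0)"

lemma UNIV_agent: "UNIV = {L, H}"
  using agent.exhaust by auto

lemma finite_bids [simp]: "finite (bids pbar)"
  by (simp add: bids_def)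

lemma card_bids [simp]: "card (bids pbar) = pbar + 1"
  by (simp add: bids_def)

lemma sum_bids_indicator:
  assumes "p \<in> bids pbar"
  shows "(\<Sum>d\<in>bids pbar. (if d = p then 1 else 0) * (g d :: real)) = g p"
proof -
  have "(\<Sum>d\<in>bids pbar. (if d = p then 1 else 0) * g d) = (\<Sum>d\<in>bids pbar. if d = p then g d else 0)"
    by (intro sum.cong) auto
  then show ?thesis
    using assms by (simp add: sum.delta)
qed

lemma bid_util_trembling_profile:
  assumes "p \<in> bids pbar"
  shows "bid_util pbar \<alpha> v (trembling_profile pbar p \<epsilon>) i b =
     (1 - \<epsilon>) * util \<alpha> v i b p + \<epsilon> / real (pbar + 1) * (\<Sum>d\<in>bids pbar. util \<alpha> v i b d)"
proof -
  have "bid_util pbar \<alpha> v (trembling_profile pbar p \<epsilon>) i b =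
      (1 - \<epsilon>) * (\<Sum>d\<in>bids pbar. (if d = p then 1 else 0) * util \<alpha> v i b d)
      + \<epsilon> / real (pbar + 1) * (\<Sum>d\<in>bids pbar. util \<alpha> v i b d)"
    unfolding bid_util_def trembling_profile_def sum_distrib_left sum.distrib[symmetric]
    by (intro sum.cong) (auto simp: algebra_simps)
  then show ?thesis
    using sum_bids_indicator[OF assms] by simp
qed

lemma is_profile_trembling_profile:
  assumes "0 \<le> \<epsilon>" "\<epsilon> \<le> 1" "p \<in> bids pbar"
  shows "is_profile pbar (trembling_profile pbar p \<epsilon>)"
proof -
  have "(\<Sum>b\<in>bids pbar. trembling_profile pbar p \<epsilon> i b) = 1" for i
  proof -
    have "(\<Sum>b\<in>bids pbar. trembling_profile pbar p \<epsilon> i b)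
        = (1 - \<epsilon>) * (\<Sum>b\<in>bids pbar. if b = p then 1 else 0) + \<epsilon>"
      unfolding trembling_profile_def by (simp add: sum.distrib sum_distrib_left[symmetric])
    then show ?thesis
      using assms(3) by (simp add: sum.delta)
  qed
  moreover have "0 \<le> trembling_profile pbar p \<epsilon> i b" for i b
    using assms unfolding trembling_profile_def by auto
  ultimately show ?thesis
    unfolding is_profile_def is_mixed_def trembling_profile_def by auto
qed

lemma full_support_trembling_profile:
  assumes "0 < \<epsilon>" "\<epsilon> \<le> 1"
  shows "full_support pbar (trembling_profile pbar p \<epsilon>)"
  using assms unfolding full_support_def trembling_profile_def
  by (auto intro: add_nonneg_pos)

lemma trembling_profile_tendsto:
  assumes "\<epsilon> \<longlonglongrightarrow> 0"
  shows "(\<lambda>n. trembling_profile pbar p (\<epsilon> n) i b) \<longlonglongrightarrow> trembling_profile pbar p 0 i b"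
  unfolding trembling_profile_def
  by (cases "b \<in> bids pbar") (auto intro!: tendsto_eq_intros assms)

lemma util_self_strict_best_reply:
  assumes "0 < \<alpha>" "\<alpha> < 1" "d \<noteq> p"
    and "real (v L) \<le> 2 * real p" "2 * real p \<le> real (v H)"
  shows "util \<alpha> v i d p < util \<alpha> v i p p"
proof (cases "d < p")
  case True
  then have "\<alpha> * p + (1 - \<alpha>) * d < \<alpha> * p + (1 - \<alpha>) * p"
    using assms(2) by simp
  then show ?thesis
    using True assms(5) by (cases i) (auto simp: util_def payment_def algebra_simps)
next
  case False
  then have "p < d" "\<alpha> * p < \<alpha> * d"
    using assms(1,3) by simp_all
  then show ?thesis
    using assms(4) by (cases i) (auto simp: util_def payment_def algebra_simps)
qed

lemma bid_util_pure_profile: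
  assumes "p \<in> bids pbar"
  shows "bid_util pbar \<alpha> v (trembling_profile pbar p 0) i b = util \<alpha> v i b p"
  by (simp add: bid_util_trembling_profile[OF assms])

lemma nash_eq_pure_profile:
  assumes "p \<in> bids pbar" "\<And>i d. util \<alpha> v i d p \<le> util \<alpha> v i p p"
  shows "nash_eq pbar \<alpha> v (trembling_profile pbar p 0)"
proof -
  have "trembling_profile pbar p 0 i b > 0 \<longleftrightarrow> b = p" for i b
    using assms(1) unfolding trembling_profile_def by auto
  then show ?thesis
    unfolding nash_eq_def bid_util_pure_profile[OF assms(1)]
    using assms is_profile_trembling_profile[of 0 p pbar] by auto
qed

lemma exp_util_pure_profile:
  assumes "p \<in> bids pbar"
  shows "exp_util pbar \<alpha> v (trembling_profile pbar p 0) i = util \<alpha> v i p p"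
proof -
  have "exp_util pbar \<alpha> v (trembling_profile pbar p 0) i
      = (\<Sum>b\<in>bids pbar. (if b = p then 1 else 0) * util \<alpha> v i b p)"
    unfolding exp_util_def bid_util_pure_profile[OF assms] using assms
    by (intro sum.cong) (auto simp: trembling_profile_def)
  then show ?thesis
    using sum_bids_indicator[OF assms] by simp
qed

text \<open>In a trembling profile all bids other than \<open>p\<close> are equally likely, so
  monotonicity only compares \<open>p\<close> with the remaining bids.\<close>

lemma weakly_payoff_monotone_trembling_profile:
  assumes "\<epsilon> \<le> 1"
    and "\<And>i d. d \<in> bids pbar \<Longrightarrow> d \<noteq> p \<Longrightarrow>
      bid_util pbar \<alpha> v (trembling_profile pbar p \<epsilon>) i d
        < bid_util pbar \<alpha> v (trembling_profile pbar p \<epsilon>) i p"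
  shows "weakly_payoff_monotone pbar \<alpha> v (trembling_profile pbar p \<epsilon>)"
  unfolding weakly_payoff_monotone_def
proof (intro allI ballI impI)
  fix i b d
  assume "b \<in> bids pbar" "d \<in> bids pbar"
    and "trembling_profile pbar p \<epsilon> i d < trembling_profile pbar p \<epsilon> i b"
  then have "b = p" "d \<noteq> p"
    using assms(1) unfolding trembling_profile_def by (auto split: if_splits)
  then show "bid_util pbar \<alpha> v (trembling_profile pbar p \<epsilon>) i d
      < bid_util pbar \<alpha> v (trembling_profile pbar p \<epsilon>) i b"
    using assms(2) \<open>d \<in> bids pbar\<close> by simp
qed

lemma eventually_weakly_payoff_monotone_trembling_profile:
  assumes "p \<in> bids pbar" "\<epsilon> \<longlonglongrightarrow> 0" "\<And>n. \<epsilon> n \<le> 1"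
    and "\<And>i d. d \<noteq> p \<Longrightarrow> util \<alpha> v i d p < util \<alpha> v i p p"
  shows "eventually (\<lambda>n. weakly_payoff_monotone pbar \<alpha> v (trembling_profile pbar p (\<epsilon> n)))
    sequentially"
proof -
  define gain where "gain i d n =
      bid_util pbar \<alpha> v (trembling_profile pbar p (\<epsilon> n)) i p
    - bid_util pbar \<alpha> v (trembling_profile pbar p (\<epsilon> n)) i d" for i d n
  have "eventually (\<lambda>n. gain i d n > 0) sequentially" if "d \<noteq> p" for i d
  proof (rule order_tendstoD)
    show "(gain i d) \<longlonglongrightarrow> util \<alpha> v i p p - util \<alpha> v i d p"
      unfolding gain_def bid_util_trembling_profile[OF assms(1)]
      by (auto intro!: tendsto_eq_intros assms(2))
  qed (use assms(4) that in simp)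
  then have "eventually (\<lambda>n. \<forall>i\<in>UNIV. \<forall>d\<in>bids pbar - {p}. gain i d n > 0) sequentially"
    by (intro eventually_ball_finite ballI) (auto simp: UNIV_agent)
  then show ?thesis
    by eventually_elim
      (auto intro!: weakly_payoff_monotone_trembling_profile assms(3) simp: gain_def)
qed

theorem mainTheorem4:
  fixes vbar pbar p :: nat and v :: "agent \<Rightarrow> nat" and \<alpha> :: real
  assumes "valid_setting vbar pbar v"
    and "0 < \<alpha>" and "\<alpha> < 1"
    and "v L div 2 \<le> p" and "p \<le> v H div 2"
  shows "\<exists>\<sigma>. nash_eq pbar \<alpha> v \<sigma>
      \<and> exp_util pbar \<alpha> v \<sigma> L = real (v L div 2) + (real p - real (v L div 2))
      \<and> exp_util pbar \<alpha> v \<sigma> H = real (v H div 2) + (real (v H div 2) - real p)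
      \<and> (\<exists>s :: nat \<Rightarrow> profile.
            (\<forall>n. is_profile pbar (s n) \<and> full_support pbar (s n)
                  \<and> weakly_payoff_monotone pbar \<alpha> v (s n))
          \<and> (\<forall>i b. (\<lambda>n. s n i b) \<longlonglongrightarrow> \<sigma> i b))"
proof -
  have vL: "real (v L div 2) * 2 = real (v L)" and vH: "real (v H div 2) * 2 = real (v H)"
    using assms(1) unfolding valid_setting_def by (auto elim!: evenE)
  have p: "p \<in> bids pbar"
    using assms(1,5) unfolding valid_setting_def bids_def by auto
  have strict: "util \<alpha> v i d p < util \<alpha> v i p p" if "d \<noteq> p" for i d
    using assms(2-5) vL vH that by (intro util_self_strict_best_reply) linarith+
  then have weak: "util \<alpha> v i d p \<le> util \<alpha> v i p p" for i d
    by (cases "d = p") (auto intro: less_imp_le)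
  define \<epsilon> where "\<epsilon> n = inverse (real (Suc n))" for n
  have \<epsilon>: "\<epsilon> \<longlonglongrightarrow> 0" "0 < \<epsilon> n" "\<epsilon> n \<le> 1" for n
    unfolding \<epsilon>_def using LIMSEQ_inverse_real_of_nat by (auto simp: field_simps)
  obtain N where N:
      "\<And>n. n \<ge> N \<Longrightarrow> weakly_payoff_monotone pbar \<alpha> v (trembling_profile pbar p (\<epsilon> n))"
    using eventually_weakly_payoff_monotone_trembling_profile[OF p \<epsilon>(1,3) strict]
    unfolding eventually_sequentially by blast
  show ?thesis
  proof (intro exI conjI allI)
    show "nash_eq pbar \<alpha> v (trembling_profile pbar p 0)"
      using nash_eq_pure_profile[OF p weak] .
    fix n i b
    let ?s = "\<lambda>n. trembling_profile pbar p (\<epsilon> (n + N))"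
    show "is_profile pbar (?s n)" "full_support pbar (?s n)"
      "weakly_payoff_monotone pbar \<alpha> v (?s n)"
      using is_profile_trembling_profile[OF less_imp_le[OF \<epsilon>(2)] \<epsilon>(3) p]
        full_support_trembling_profile[OF \<epsilon>(2,3)] N[of "n + N"] by simp_all
    show "(\<lambda>n. ?s n i b) \<longlonglongrightarrow> trembling_profile pbar p 0 i b"
      using trembling_profile_tendsto[OF LIMSEQ_ignore_initial_segment[OF \<epsilon>(1)]] .
  qed (use vL vH in
      \<open>simp_all add: exp_util_pure_profile[OF p] util_def payment_def algebra_simps\<close>)
qed

end
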